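(* Let $p\ge2$ and let $n\ge1$ be a natural number whose tribonacci Zeckendorf representation is $[n]=\varepsilon_p\varepsilon_{p-1}\cdots\varepsilon_2$ with $\varepsilon_p=1$. Then for every word $u\in(\tau^{p-1}(c))^{\varepsilon_p}(\tau^{p-2}(c))^{\varepsilon_{p-1}}\cdots(\tau(c))^{\varepsilon_2}$, at least one of the words in $u\,\mathcal{S}_\tau$ is a prefix of some word in $\tau^p(a)$, where $\mathcal{S}_\tau=\{ab,ba,ac,ca\}$.
   Context: Tribonacci numbers: $t_0=0$, $t_1=t_2=1$, $t_n=t_{n-1}+t_{n-2}+t_{n-3}$ for $n\ge3$. Every positive integer $n$ has a unique representation $n=\sum_{i=2}^r\varepsilon_it_i$ with $\varepsilon_i\in\{0,1\}$, $\varepsilon_r=1$ and $\varepsilon_i\varepsilon_{i+1}\varepsilon_{i+2}=0$; write $[n]=\varepsilon_r\cdots\varepsilon_2$. The random tribonacci substitution is $\tau\colon a\mapsto\{ab,ba\},\ b\mapsto\{ac,ca\},\ c\mapsto\{a\}$, extended to words by set concatenation and to sets by unions; $\tau^p$ is its $p$-fold iterate. For a set $A$ of words, $A^0=\{\text{empty word}\}$, $A^k$ the $k$-fold set concatenation. Note all words in $\tau^{i-1}(c)$ have length $t_i$. *)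

theory Defs
  imports Main "HOL-Library.Sublist"
begin

fun trib :: "nat \<Rightarrow> nat" where
  "trib 0 = 0"
| "trib (Suc 0) = 1"
| "trib (Suc (Suc 0)) = 1"
| "trib (Suc (Suc (Suc n))) = trib (Suc (Suc n)) + trib (Suc n) + trib n"

definition is_trib_repr :: "nat \<Rightarrow> nat \<Rightarrow> (nat \<Rightarrow> nat) \<Rightarrow> bool" where
  "is_trib_repr n p eps \<longleftrightarrow>
     (\<forall>i\<in>{2..p}. eps i \<le> 1) \<and> eps p = 1 \<and>
     (\<forall>i. 2 \<le> i \<and> i + 2 \<le> p \<longrightarrow> eps i * eps (i+1) * eps (i+2) = 0) \<and>
     n = (\<Sum>i=2..p. eps i * trib i)"

datatype letter = A | B | C

definition setconc :: "'a list set \<Rightarrow> 'a list set \<Rightarrow> 'a list set" where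
  "setconc X Y = {u @ v | u v. u \<in> X \<and> v \<in> Y}"

definition setpow :: "'a list set \<Rightarrow> nat \<Rightarrow> 'a list set" where
  "setpow X k = ((setconc X) ^^ k) {[]}"

fun tau_letter :: "letter \<Rightarrow> letter list set" where
  "tau_letter A = {[A,B],[B,A]}"
| "tau_letter B = {[A,C],[C,A]}"
| "tau_letter C = {[A]}"

fun tau_word :: "letter list \<Rightarrow> letter list set" where
  "tau_word [] = {[]}"
| "tau_word (x # xs) = setconc (tau_letter x) (tau_word xs)"

definition tau_set :: "letter list set \<Rightarrow> letter list set" where
  "tau_set W = (\<Union>w\<in>W. tau_word w)"

definition tau_iter :: "nat \<Rightarrow> letter \<Rightarrow> letter list set" where
  "tau_iter k x = (tau_set ^^ k) {[x]}"

text \<open>(tau^(p-1)(c))^(eps p) (tau^(p-2)(c))^(eps (p-1)) ... (tau(c))^(eps 2)\<close>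
definition zeck_prod :: "nat \<Rightarrow> (nat \<Rightarrow> nat) \<Rightarrow> letter list set" where
  "zeck_prod p eps =
     foldr (\<lambda>i acc. setconc (setpow (tau_iter (i - 1) C) (eps i)) acc)
           (rev [2..<Suc p]) {[]}"

definition S_tau :: "letter list set" where
  "S_tau = {[A,B],[B,A],[A,C],[C,A]}"

end

theory Submission imports Defs begin

text \<open>Put d j = eps (j + 2), so that the factors of zeck_prod are (tau^j(a))^(d j), and prove
  by strong induction on q that every word u in the product of the factors j = q, ..., 0 has an
  extension u s, s \<in> S_tau, that is a prefix of a word in tau^q(aba); since abac \<in> tau^2(a),
  the theorem follows. A top digit 0 is absorbed by abacab \<in> tau(aba). A top digit 1 contributes
  the leading factor tau^q(a) of tau^q(aba), leaving prefixes of tau^q(ba) to be found: after a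
  digit 0 these come from aba abac \<in> tau^2(ba); after a second 1 from acab \<in> tau(ba) and
  prefixes of tau^(q-1)(cab), and then the forbidden block 111 forces a digit 0, after which
  aba bacaba \<in> tau^2(cab) applies.\<close>

lemma setconcI: "u \<in> X \<Longrightarrow> v \<in> Y \<Longrightarrow> u @ v \<in> setconc X Y"
  by (auto simp: setconc_def)

lemma setconc_assoc: "setconc (setconc X Y) Z = setconc X (setconc Y Z)"
  unfolding setconc_def by (auto; metis append.assoc)

lemma setconc_Nil_left [simp]: "setconc {[]} X = X"
  by (auto simp: setconc_def)

lemma tau_word_append: "tau_word (u @ v) = setconc (tau_word u) (tau_word v)"
  by (induction u) (simp_all add: setconc_assoc)

lemma tau_set_setconc: "tau_set (setconc X Y) = setconc (tau_set X) (tau_set Y)"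
  unfolding tau_set_def setconc_def by (fastforce simp: tau_word_append setconc_def)

lemma funpow_tau_set_setconc:
  "(tau_set ^^ m) (setconc X Y) = setconc ((tau_set ^^ m) X) ((tau_set ^^ m) Y)"
  by (induction m) (simp_all add: tau_set_setconc)

lemma funpow_tau_set_UN: "(tau_set ^^ m) X = (\<Union>x\<in>X. (tau_set ^^ m) {x})"
proof (induction m arbitrary: X)
  case 0
  then show ?case by auto
next
  case (Suc m)
  have "(tau_set ^^ Suc m) X = tau_set (\<Union>x\<in>X. (tau_set ^^ m) {x})"
    by (simp only: funpow.simps comp_apply Suc.IH[of X])
  also have "\<dots> = (\<Union>x\<in>X. (tau_set ^^ Suc m) {x})"
    unfolding tau_set_def by simp
  finally show ?case .
qed

definition tau_pow :: "nat \<Rightarrow> letter list \<Rightarrow> letter list set" where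
  "tau_pow m w = (tau_set ^^ m) {w}"

lemma tau_pow_0 [simp]: "tau_pow 0 w = {w}"
  by (simp add: tau_pow_def)

lemma tau_pow_Suc: "tau_pow (Suc m) w = tau_set (tau_pow m w)"
  by (simp add: tau_pow_def)

lemma tau_iter_eq_tau_pow: "tau_iter m x = tau_pow m [x]"
  by (simp add: tau_iter_def tau_pow_def)

lemma tau_pow_append: "tau_pow m (u @ v) = setconc (tau_pow m u) (tau_pow m v)"
proof -
  have "{u @ v} = setconc {u} {v}" by (simp add: setconc_def)
  then show ?thesis unfolding tau_pow_def by (simp only: funpow_tau_set_setconc)
qed

lemma tau_pow_appendI: "x \<in> tau_pow m u \<Longrightarrow> y \<in> tau_pow m v \<Longrightarrow> x @ y \<in> tau_pow m (u @ v)"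
  by (simp add: tau_pow_append setconcI)

lemma tau_pow_trans: "w' \<in> tau_pow a w \<Longrightarrow> y \<in> tau_pow b w' \<Longrightarrow> y \<in> tau_pow (b + a) w"
  unfolding tau_pow_def funpow_add comp_def by (subst funpow_tau_set_UN) blast

lemma tau_word_nonempty: "tau_word w \<noteq> {}"
proof (induction w)
  case (Cons x w)
  then obtain v where "v \<in> tau_word w" by blast
  moreover obtain u where "u \<in> tau_letter x" by (cases x) auto
  ultimately show ?case using setconcI[of u "tau_letter x" v "tau_word w"] by auto
qed simp

lemma tau_pow_nonempty: "tau_pow m w \<noteq> {}"
proof (induction m arbitrary: w)
  case (Suc m)
  then obtain x where "x \<in> tau_pow m w" by blast
  with tau_word_nonempty show ?case by (auto simp: tau_pow_Suc tau_set_def)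
qed simp

lemma tau_pow_prefix_extend:
  assumes "x @ r \<in> tau_pow k w" and "y \<in> tau_pow m x"
  shows "\<exists>y'\<in>tau_pow (m + k) w. prefix y y'"
proof -
  obtain z where "z \<in> tau_pow m r" using tau_pow_nonempty by blast
  with assms(2) have "y @ z \<in> tau_pow m (x @ r)" by (rule tau_pow_appendI)
  with assms(1) have "y @ z \<in> tau_pow (m + k) w" by (rule tau_pow_trans)
  moreover have "prefix y (y @ z)" by simp
  ultimately show ?thesis by blast
qed

definition S_extendable :: "letter list set \<Rightarrow> letter list \<Rightarrow> bool" where
  "S_extendable W u \<longleftrightarrow> (\<exists>s\<in>S_tau. \<exists>y\<in>W. prefix (u @ s) y)"

lemma S_extendable_setconc:
  assumes "v \<in> X" and "S_extendable Y u"
  shows "S_extendable (setconc X Y) (v @ u)"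
proof -
  from assms(2) obtain s y where "s \<in> S_tau" "y \<in> Y" "prefix (u @ s) y"
    unfolding S_extendable_def by blast
  moreover from assms(1) \<open>y \<in> Y\<close> have "v @ y \<in> setconc X Y" by (rule setconcI)
  moreover from \<open>prefix (u @ s) y\<close> have "prefix ((v @ u) @ s) (v @ y)" by simp
  ultimately show ?thesis unfolding S_extendable_def by blast
qed

lemma S_extendable_lift:
  assumes "S_extendable (tau_pow m x) u" and "x @ r \<in> tau_pow k w"
  shows "S_extendable (tau_pow (m + k) w) u"
proof -
  from assms(1) obtain s y where "s \<in> S_tau" "y \<in> tau_pow m x" "prefix (u @ s) y"
    unfolding S_extendable_def by blast
  moreover from tau_pow_prefix_extend[OF assms(2) \<open>y \<in> tau_pow m x\<close>]
  obtain y' where "y' \<in> tau_pow (m + k) w" "prefix y y'" by blast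
  ultimately show ?thesis unfolding S_extendable_def using prefix_order.trans by blast
qed

lemma mem_setconc_iff:
  "y \<in> setconc X Y \<longleftrightarrow> (\<exists>u\<in>X. prefix u y \<and> drop (length u) y \<in> Y)"
  by (force simp: setconc_def prefix_def)

lemma tau_pow_2I: "x \<in> tau_word w \<Longrightarrow> y \<in> tau_word x \<Longrightarrow> y \<in> tau_pow 2 w"
  by (auto simp: tau_pow_Suc numeral_eq_Suc tau_set_def)

lemma tau_pow_witnesses:
  "[A,B,A] @ [C] \<in> tau_pow 2 [A]"
  "[A,B,A] @ [C,A,B] \<in> tau_pow 1 [A,B,A]"
  "A # [C,A,B] \<in> tau_pow 1 [B,A]"
  "[A,C] @ [A,B] \<in> tau_pow 1 [B,A]"
  "[A,B] @ [A,A,C] \<in> tau_pow 1 [C,A,B]"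
  "[A,B,A] @ [A,B,A,C] \<in> tau_pow 2 [B,A]"
  "[A,B,A] @ [B,A,C,A,B,A] \<in> tau_pow 2 [C,A,B]"
proof -
  show "[A,B,A] @ [C] \<in> tau_pow 2 [A]"
    by (rule tau_pow_2I[where x="[A,B]"]) (simp_all add: mem_setconc_iff)
  show "[A,B,A] @ [C,A,B] \<in> tau_pow 1 [A,B,A]" "A # [C,A,B] \<in> tau_pow 1 [B,A]"
    "[A,C] @ [A,B] \<in> tau_pow 1 [B,A]" "[A,B] @ [A,A,C] \<in> tau_pow 1 [C,A,B]"
    by (simp_all add: tau_set_def tau_pow_Suc mem_setconc_iff)
  show "[A,B,A] @ [A,B,A,C] \<in> tau_pow 2 [B,A]"
    by (rule tau_pow_2I[where x="[C,A,A,B]"]) (simp_all add: mem_setconc_iff)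
  show "[A,B,A] @ [B,A,C,A,B,A] \<in> tau_pow 2 [C,A,B]"
    by (rule tau_pow_2I[where x="[A,A,B,A,C]"]) (simp_all add: mem_setconc_iff)
qed

lemma setpow_0 [simp]: "setpow X 0 = {[]}"
  by (simp add: setpow_def)

lemma setpow_Suc_0 [simp]: "setpow X (Suc 0) = X"
  by (auto simp: setpow_def setconc_def)

text \<open>With d j = eps (j + 2), the factor (tau^(j+1)(c))^(eps (j+2)) of zeck_prod is
  (tau^j(a))^(d j), because tau(c) = {a}.\<close>
fun tau_powers_prod :: "(nat \<Rightarrow> nat) \<Rightarrow> nat \<Rightarrow> letter list set" where
  "tau_powers_prod d 0 = {[]}"
| "tau_powers_prod d (Suc k) = setconc (setpow (tau_pow k [A]) (d k)) (tau_powers_prod d k)"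

lemma tau_iter_Suc_C: "tau_iter (Suc m) C = tau_pow m [A]"
proof -
  have "tau_set {[C]} = {[A]}" by (simp add: tau_set_def setconc_def)
  then show ?thesis unfolding tau_iter_def tau_pow_def funpow_Suc_right comp_def by simp
qed

lemma zeck_prod_eq_tau_powers_prod: "zeck_prod (Suc k) eps = tau_powers_prod (\<lambda>j. eps (j + 2)) k"
proof (induction k)
  case (Suc k)
  have "rev [2..<Suc (Suc (Suc k))] = Suc (Suc k) # rev [2..<Suc (Suc k)]" by simp
  with Suc show ?case by (simp add: zeck_prod_def tau_iter_Suc_C)
qed (simp add: zeck_prod_def)

definition prod_extendable :: "(nat \<Rightarrow> nat) \<Rightarrow> nat \<Rightarrow> nat \<Rightarrow> letter list \<Rightarrow> bool" where
  "prod_extendable d k m w \<longleftrightarrow> (\<forall>u\<in>tau_powers_prod d k. S_extendable (tau_pow m w) u)"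

lemma prod_extendable_base:
  "prod_extendable d 0 0 [A,B]" "prod_extendable d 0 0 [B,A]"
  "prod_extendable d 0 0 [A,C]" "prod_extendable d 0 0 [C,A,B]"
  by (simp_all add: prod_extendable_def S_extendable_def S_tau_def)

lemma prod_extendable_digit_0:
  assumes "prod_extendable d k m x" and "d k = 0" and "x @ r \<in> tau_pow j w"
  shows "prod_extendable d (Suc k) (m + j) w"
  unfolding prod_extendable_def
proof
  fix u assume "u \<in> tau_powers_prod d (Suc k)"
  with assms(1,2) have "S_extendable (tau_pow m x) u" by (simp add: prod_extendable_def)
  then show "S_extendable (tau_pow (m + j) w) u" using assms(3) by (rule S_extendable_lift)
qed

lemma prod_extendable_digit_1:
  assumes "prod_extendable d k k x" and "d k = 1" and "A # x \<in> tau_pow j w"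
  shows "prod_extendable d (Suc k) (k + j) w"
  unfolding prod_extendable_def
proof
  fix u assume "u \<in> tau_powers_prod d (Suc k)"
  with assms(2) obtain v u' where "u = v @ u'" "v \<in> tau_pow k [A]" "u' \<in> tau_powers_prod d k"
    by (auto simp: setconc_def)
  with assms(1) have "S_extendable (setconc (tau_pow k [A]) (tau_pow k x)) u"
    using S_extendable_setconc unfolding prod_extendable_def by blast
  then have "S_extendable (tau_pow k ([A] @ x)) u" by (simp only: tau_pow_append)
  with assms(3) show "S_extendable (tau_pow (k + j) w) u"
    using S_extendable_lift[where r="[]"] by simp
qed

lemma prod_extendable_after_digit_0:
  assumes "d k = 0" and "\<And>k'. k = Suc k' \<Longrightarrow> prod_extendable d k k' [A,B,A]"
    and "prod_extendable d 0 0 x" and "x @ r \<in> tau_pow 1 w" and "[A,B,A] @ r' \<in> tau_pow 2 w"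
  shows "prod_extendable d (Suc k) (Suc k) w"
proof (cases k)
  case 0
  from assms(3) assms(1)[unfolded 0] assms(4) have "prod_extendable d (Suc 0) (0 + 1) w"
    by (rule prod_extendable_digit_0)
  with 0 show ?thesis by simp
next
  case (Suc k')
  from assms(2)[OF Suc] assms(1) assms(5) have "prod_extendable d (Suc k) (k' + 2) w"
    by (rule prod_extendable_digit_0)
  with Suc show ?thesis by simp
qed

lemma prod_extendable_digits_1_1:
  assumes "prod_extendable d k k [C,A,B]" and "d k = 1" and "d (Suc k) = 1"
  shows "prod_extendable d (Suc (Suc k)) (Suc k) [A,B,A]"
proof -
  from assms(1,2) tau_pow_witnesses(3) have "prod_extendable d (Suc k) (k + 1) [B,A]"
    by (rule prod_extendable_digit_1)
  from this[simplified] assms(3) have "prod_extendable d (Suc (Suc k)) (Suc k + 0) [A,B,A]"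
    by (rule prod_extendable_digit_1) simp
  then show ?thesis by simp
qed

lemma prod_extendable_first_digit:
  assumes "d 0 \<le> 1"
  shows "prod_extendable d (Suc 0) 0 [A,B,A]"
proof -
  from assms consider "d 0 = 0" | "d 0 = 1" by fastforce
  then have "prod_extendable d (Suc 0) (0 + 0) [A,B,A]"
  proof cases
    case 1
    from prod_extendable_base(1) this show ?thesis
      by (rule prod_extendable_digit_0[where r="[A]"]) simp
  next
    case 2
    from prod_extendable_base(2) this show ?thesis
      by (rule prod_extendable_digit_1) simp
  qed
  then show ?thesis by simp
qed

lemma prod_extendable_tau_powers_prod:
  assumes "\<forall>j\<le>q. d j \<le> 1" and "\<forall>j. j + 2 \<le> q \<longrightarrow> d j * d (j + 1) * d (j + 2) = 0"
  shows "prod_extendable d (Suc q) q [A,B,A]"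
  using assms
proof (induction q rule: less_induct)
  case (less q)
  have IH: "prod_extendable d (Suc q') q' [A,B,A]" if "q' < q" for q'
    using less.IH[OF that] less.prems that by auto
  have digit: "d j = 0 \<or> d j = 1" if "j \<le> q" for j
    using less.prems(1) that by fastforce
  show ?case
  proof (cases q)
    case 0
    with less.prems(1) show ?thesis using prod_extendable_first_digit by simp
  next
    case (Suc q1)
    have below: "prod_extendable d k k' [A,B,A]" if "k \<le> q" and "k = Suc k'" for k k'
      using IH[of k'] that by simp
    consider "d q = 0" | "d q = 1" "d q1 = 0" | "d q = 1" "d q1 = 1"
      using digit[of q] digit[of q1] Suc by fastforce
    then show ?thesis
    proof cases
      case 1
      from IH[of q1] this tau_pow_witnesses(2)
      have "prod_extendable d (Suc q) (q1 + 1) [A,B,A]"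
        unfolding Suc by (rule prod_extendable_digit_0) simp
      with Suc show ?thesis by simp
    next
      case 2
      from 2(2) below prod_extendable_base(3) tau_pow_witnesses(4,6)
      have "prod_extendable d q q [B,A]"
        unfolding Suc by (rule prod_extendable_after_digit_0) (simp add: Suc)
      from this 2(1) have "prod_extendable d (Suc q) (q + 0) [A,B,A]"
        by (rule prod_extendable_digit_1) simp
      then show ?thesis by simp
    next
      case 3
      have "prod_extendable d q1 q1 [C,A,B]"
      proof (cases q1)
        case 0
        from prod_extendable_base(4) show ?thesis unfolding 0 .
      next
        case (Suc q2)
        with less.prems(2) 3 \<open>q = Suc q1\<close> have "d q2 = 0" by (auto simp: numeral_eq_Suc)
        from this below prod_extendable_base(1) tau_pow_witnesses(5,7) show ?thesis
          unfolding Suc by (rule prod_extendable_after_digit_0) (simp add: Suc \<open>q = Suc q1\<close>)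
      qed
      from this 3(2,1) show ?thesis unfolding Suc by (rule prod_extendable_digits_1_1)
    qed
  qed
qed

theorem mainTheorem6:
  fixes p n :: nat and eps :: "nat \<Rightarrow> nat" and u :: "letter list"
  assumes "p \<ge> 2" and "n \<ge> 1"
    and "is_trib_repr n p eps"
    and "u \<in> zeck_prod p eps"
  shows "\<exists>s\<in>S_tau. \<exists>w\<in>tau_iter p A. prefix (u @ s) w"
proof -
  \<comment> \<open>Only the digit conditions of the representation are used, not the value n.\<close>
  from assms(1) obtain q where p: "p = q + 2" by (metis add.commute le_add_diff_inverse)
  define d where "d = (\<lambda>j. eps (j + 2))"
  have "\<forall>j\<le>q. d j \<le> 1" and "\<forall>j. j + 2 \<le> q \<longrightarrow> d j * d (j + 1) * d (j + 2) = 0"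
    using assms(3) unfolding is_trib_repr_def d_def p by (auto simp: algebra_simps)
  moreover from assms(4) have "u \<in> tau_powers_prod d (Suc q)"
    using zeck_prod_eq_tau_powers_prod[of "Suc q" eps] by (simp add: p d_def)
  ultimately have "S_extendable (tau_pow q [A,B,A]) u"
    using prod_extendable_tau_powers_prod unfolding prod_extendable_def by blast
  then have "S_extendable (tau_pow (q + 2) [A]) u"
    using tau_pow_witnesses(1) by (rule S_extendable_lift)
  then show ?thesis unfolding S_extendable_def p tau_iter_eq_tau_pow .
qed

end
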